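(* Let $G=(V,E)$ be an $n$-vertex graph, $q>0$ an integer, $0<\alpha\le1$, and suppose $n\ge q c_q/\alpha^2$, where $c_q=\sum_{i=0}^{q}q^i$. Let $u,v$ be two vertices chosen uniformly at random from $V$, and let $H_u$ and $H_v$ be the subgraphs visited by two (independent) $q$-random BFS starting at $u$ and $v$, respectively. Then with probability at least $1-2\alpha q c_q$, no edge is contained in both $H_u$ and $H_v$.
   Context: $q$-random BFS ($q$-RBFS) from a vertex $v$ in the random neighbor model (where a random neighbor query for $u$ returns a uniformly random neighbor of $u$): initialize a queue $Q=(v)$, level $\ell[v]=0$ (all others $\infty$), and $H=(\{v\},\emptyset)$ rooted at $v$; while $Q$ is nonempty, pop $u$ and make $q$ independent random neighbor queries for $u$ obtaining $s_{u,1},\dots,s_{u,q}$; for each $i$ add $s_{u,i}$ and the edge $\{u,s_{u,i}\}$ to $H$, and if $\ell[u]<q-1$ and $\ell[s_{u,i}]=\infty$, set $\ell[s_{u,i}]=\ell[u]+1$ and enqueue $s_{u,i}$; return $H$ (undirected, simple). *)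

theory Defs
  imports "HOL-Probability.Probability"
begin

definition simple_graph :: "'a set \<Rightarrow> 'a set set \<Rightarrow> bool" where
  "simple_graph V E \<longleftrightarrow> finite V \<and>
     (\<forall>e\<in>E. \<exists>x y. x \<noteq> y \<and> x \<in> V \<and> y \<in> V \<and> e = {x, y})"

definition nbrs :: "'a set set \<Rightarrow> 'a \<Rightarrow> 'a set" where
  "nbrs E u = {w. {u, w} \<in> E}"

definition rn_query :: "'a set set \<Rightarrow> 'a \<Rightarrow> 'a option pmf" where
  "rn_query E u = (if nbrs E u = {} then return_pmf None
                   else map_pmf Some (pmf_of_set (nbrs E u)))"

text \<open>State: (queue, level (None = infinity), vertices of H, edges of H).\<close>
type_synonym 'a rbfs_state = "'a list \<times> ('a \<Rightarrow> nat option) \<times> 'a set \<times> 'a set set"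

fun rbfs_process :: "nat \<Rightarrow> 'a \<Rightarrow> 'a option \<Rightarrow> 'a rbfs_state \<Rightarrow> 'a rbfs_state" where
  "rbfs_process q u None st = st"
| "rbfs_process q u (Some s) (Q, lev, HV, HE) =
     (case lev u of
        Some l \<Rightarrow> if l < q - 1 \<and> lev s = None
                  then (Q @ [s], lev(s := Some (l + 1)), insert s HV, insert {u, s} HE)
                  else (Q, lev, insert s HV, insert {u, s} HE)
      | None \<Rightarrow> (Q, lev, insert s HV, insert {u, s} HE))"

fun rbfs_queries :: "nat \<Rightarrow> 'a set set \<Rightarrow> 'a \<Rightarrow> nat \<Rightarrow> 'a rbfs_state \<Rightarrow> 'a rbfs_state pmf" where
  "rbfs_queries q E u 0 st = return_pmf st"
| "rbfs_queries q E u (Suc k) st =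
     bind_pmf (rn_query E u) (\<lambda>s. rbfs_queries q E u k (rbfs_process q u s st))"

fun rbfs_step :: "nat \<Rightarrow> 'a set set \<Rightarrow> 'a rbfs_state \<Rightarrow> 'a rbfs_state pmf" where
  "rbfs_step q E ([], lev, HV, HE) = return_pmf ([], lev, HV, HE)"
| "rbfs_step q E (u # Q, lev, HV, HE) = rbfs_queries q E u q (Q, lev, HV, HE)"

fun rbfs_iter :: "nat \<Rightarrow> 'a set set \<Rightarrow> nat \<Rightarrow> 'a rbfs_state \<Rightarrow> 'a rbfs_state pmf" where
  "rbfs_iter q E 0 st = return_pmf st"
| "rbfs_iter q E (Suc k) st = bind_pmf (rbfs_step q E st) (rbfs_iter q E k)"

text \<open>q-RBFS from v: each vertex is enqueued at most once, so card V + 1 loop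
  iterations suffice for the queue to be empty; returns H = (vertices, edges).\<close>
definition q_rbfs :: "nat \<Rightarrow> 'a set \<Rightarrow> 'a set set \<Rightarrow> 'a \<Rightarrow> ('a set \<times> 'a set set) pmf" where
  "q_rbfs q V E v =
     map_pmf (\<lambda>(Q, lev, HV, HE). (HV, HE))
       (rbfs_iter q E (card V + 1) ([v], (\<lambda>_. None)(v := Some 0), {v}, {}))"

definition c_q :: "nat \<Rightarrow> real" where
  "c_q q = (\<Sum>i\<le>q. real q ^ i)"

end

theory Submission
  imports Defs
begin

(*
  Fix an edge e and let T_D(w) be the expected number of times e is drawn in the depth-D tree
  in which every vertex draws q random neighbours as its children. While q-RBFS runs, the
  quantity "1 if e has been found, otherwise the sum of T over the queue at the remaining depths"
  is a supermartingale, so P(e in H_v) <= T_q(v). Starting from the uniform vertex distribution,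
  a random-walk step preserves the bound 1/n on mass per unit of degree and does not increase the
  total mass; unfolding T along the walk therefore gives P(e in H) <= 2(c_q - 1)/n for every edge
  and sum_e P(e in H) <= c_q - 1. For two independent searches,
  P(some common edge) <= sum_e P(e in H)^2 <= 2(c_q - 1)^2/n, which is at most 2 alpha q c_q
  when n >= q c_q / alpha^2.
*)

section \<open>Neighbourhoods\<close>

lemma nbrs_subset:
  assumes "simple_graph V E"
  shows "nbrs E w \<subseteq> V"
proof
  fix s assume "s \<in> nbrs E w"
  then have "{w, s} \<in> E" by (simp add: nbrs_def)
  with assms obtain a b where "a \<in> V" "b \<in> V" "{w, s} = {a, b}"
    unfolding simple_graph_def by blast
  then show "s \<in> V" by (auto simp: doubleton_eq_iff)
qed

lemma finite_nbrs:
  assumes "simple_graph V E"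
  shows "finite (nbrs E w)"
  using finite_subset[OF nbrs_subset[OF assms]] assms by (simp add: simple_graph_def)

lemma mem_nbrs_commute: "s \<in> nbrs E w \<longleftrightarrow> w \<in> nbrs E s"
  by (simp add: nbrs_def insert_commute)

lemma finite_edges:
  assumes "simple_graph V E"
  shows "finite E"
proof (rule finite_subset)
  show "E \<subseteq> Pow V"
    using assms by (fastforce simp: simple_graph_def)
  show "finite (Pow V)"
    using assms by (simp add: simple_graph_def)
qed

lemma sum_nbrs_swap:
  assumes "simple_graph V E"
  shows "(\<Sum>w\<in>V. \<Sum>s\<in>nbrs E w. g w s) = (\<Sum>s\<in>V. \<Sum>w\<in>nbrs E s. g w s)"
proof -
  have fin: "finite V" using assms by (simp add: simple_graph_def)
  have left: "{s \<in> V. w \<in> nbrs E s} = nbrs E w" for w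
    using nbrs_subset[OF assms, of w] by (auto simp: mem_nbrs_commute)
  have right: "{w \<in> V. w \<in> nbrs E s} = nbrs E s" for s
    using nbrs_subset[OF assms, of s] by auto
  have "(\<Sum>w\<in>V. \<Sum>s\<in>{s \<in> V. w \<in> nbrs E s}. g w s) = (\<Sum>s\<in>V. \<Sum>w\<in>{w \<in> V. w \<in> nbrs E s}. g w s)"
    by (rule sum.swap_restrict[OF fin fin])
  then show ?thesis
    by (simp only: left right)
qed

section \<open>Expected edge hits of the random neighbour tree\<close>

text \<open>This is T_D(w) of the proof idea. At an isolated vertex the average is 0/0 = 0, matching
  the query answer None, which adds no edge.\<close>
fun tree_hits :: "nat \<Rightarrow> 'a set set \<Rightarrow> 'a set \<Rightarrow> nat \<Rightarrow> 'a \<Rightarrow> real" where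
  "tree_hits q E e 0 w = 0"
| "tree_hits q E e (Suc D) w =
     q * (\<Sum>s\<in>nbrs E w. of_bool ({w, s} = e) + tree_hits q E e D s) / card (nbrs E w)"

definition query_hits :: "nat \<Rightarrow> 'a set set \<Rightarrow> 'a set \<Rightarrow> nat \<Rightarrow> 'a \<Rightarrow> real" where
  "query_hits q E e D w =
     (\<Sum>s\<in>nbrs E w. of_bool ({w, s} = e) + tree_hits q E e D s) / card (nbrs E w)"

lemma tree_hits_Suc_query_hits: "tree_hits q E e (Suc D) w = q * query_hits q E e D w"
  by (simp add: query_hits_def)

lemma tree_hits_nonneg: "0 \<le> tree_hits q E e D w"
proof (induction D arbitrary: w)
  case (Suc D)
  then show ?case
    by (simp only: tree_hits.simps)
      (intro divide_nonneg_nonneg mult_nonneg_nonneg sum_nonneg add_nonneg_nonneg; simp add: Suc.IH)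
qed simp

lemma query_hits_nonneg: "0 \<le> query_hits q E e D w"
  unfolding query_hits_def
  by (auto intro!: sum_nonneg add_nonneg_nonneg divide_nonneg_nonneg tree_hits_nonneg)

lemma tree_hits_mono:
  assumes "D \<le> D'"
  shows "tree_hits q E e D w \<le> tree_hits q E e D' w"
proof -
  have "tree_hits q E e D w \<le> tree_hits q E e (Suc D) w" for D w
  proof (induction D arbitrary: w)
    case 0
    show ?case using tree_hits_nonneg[of q E e "Suc 0" w] by simp
  next
    case (Suc D)
    have "(\<Sum>s\<in>nbrs E w. of_bool ({w, s} = e) + tree_hits q E e D s)
        \<le> (\<Sum>s\<in>nbrs E w. of_bool ({w, s} = e) + tree_hits q E e (Suc D) s)"
      by (intro sum_mono add_left_mono Suc.IH)
    then show ?case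
      by (simp only: tree_hits.simps(2)) (intro divide_right_mono mult_left_mono; simp)
  qed
  then show ?thesis
    using lift_Suc_mono_le[of "\<lambda>D. tree_hits q E e D w", OF _ assms] by blast
qed

lemma tree_hits_non_edge: "e \<notin> E \<Longrightarrow> tree_hits q E e D w = 0"
  by (induction D arbitrary: w) (auto simp: nbrs_def intro!: sum.neutral)

text \<open>A mass distribution m on the vertices, pushed one step along the random walk;
  mass sitting on isolated vertices is lost.\<close>
definition walk_step :: "'a set set \<Rightarrow> ('a \<Rightarrow> real) \<Rightarrow> 'a \<Rightarrow> real" where
  "walk_step E m s = (\<Sum>w\<in>nbrs E s. m w / card (nbrs E w))"

definition crossing_mass :: "'a set \<Rightarrow> 'a set set \<Rightarrow> ('a \<Rightarrow> real) \<Rightarrow> 'a set \<Rightarrow> real" where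
  "crossing_mass V E m e = (\<Sum>w\<in>V. \<Sum>s\<in>nbrs E w. m w / card (nbrs E w) * of_bool ({w, s} = e))"

lemma walk_step_nonneg: "(\<And>w. 0 \<le> m w) \<Longrightarrow> 0 \<le> walk_step E m s"
  unfolding walk_step_def by (intro sum_nonneg divide_nonneg_nonneg) auto

lemma sum_mult_query_hits:
  assumes "simple_graph V E"
  shows "(\<Sum>w\<in>V. m w * query_hits q E e D w)
    = crossing_mass V E m e + (\<Sum>s\<in>V. walk_step E m s * tree_hits q E e D s)"
proof -
  have "(\<Sum>w\<in>V. m w * query_hits q E e D w)
      = (\<Sum>w\<in>V. \<Sum>s\<in>nbrs E w. m w / card (nbrs E w) * (of_bool ({w, s} = e) + tree_hits q E e D s))"
    by (simp add: query_hits_def sum_distrib_left sum_divide_distrib)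
  also have "\<dots> = crossing_mass V E m e
      + (\<Sum>w\<in>V. \<Sum>s\<in>nbrs E w. m w / card (nbrs E w) * tree_hits q E e D s)"
    by (simp add: crossing_mass_def distrib_left sum.distrib)
  also have "\<dots> = crossing_mass V E m e + (\<Sum>s\<in>V. walk_step E m s * tree_hits q E e D s)"
    by (subst sum_nbrs_swap[OF assms]) (simp add: walk_step_def sum_distrib_right)
  finally show ?thesis .
qed

lemma sum_walk_step_le:
  assumes "simple_graph V E" and "\<And>w. 0 \<le> m w"
  shows "(\<Sum>s\<in>V. walk_step E m s) \<le> (\<Sum>w\<in>V. m w)"
proof -
  have "(\<Sum>s\<in>V. walk_step E m s) = (\<Sum>w\<in>V. card (nbrs E w) * (m w / card (nbrs E w)))"
    unfolding walk_step_def by (subst sum_nbrs_swap[OF assms(1)]) simp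
  also have "\<dots> \<le> (\<Sum>w\<in>V. m w)"
    using assms(2) by (intro sum_mono) (simp add: divide_le_eq_1)
  finally show ?thesis .
qed

lemma walk_step_degree_le:
  assumes "\<And>w. 0 \<le> m w" and "\<And>w. m w / card (nbrs E w) \<le> c"
  shows "walk_step E m s / card (nbrs E s) \<le> c"
proof -
  have "walk_step E m s \<le> (\<Sum>w\<in>nbrs E s. c)"
    unfolding walk_step_def by (intro sum_mono assms(2))
  moreover have "0 \<le> c"
    using assms[of s] by (meson divide_nonneg_nonneg of_nat_0_le_iff order_trans)
  ultimately show ?thesis
    by (cases "card (nbrs E s) = 0") (simp_all add: divide_le_eq mult.commute)
qed

lemma crossing_mass_le:
  assumes "simple_graph V E" and e: "e = {x, y}"
    and m_nonneg: "\<And>w. 0 \<le> m w" and m_le: "\<And>w. m w / card (nbrs E w) \<le> c"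
  shows "crossing_mass V E m e \<le> 2 * c"
proof -
  have fin: "finite V" using assms(1) by (simp add: simple_graph_def)
  have c_nonneg: "0 \<le> c"
    using m_le[of x] m_nonneg[of x] by (meson divide_nonneg_nonneg of_nat_0_le_iff order_trans)
  have per_vertex: "(\<Sum>s\<in>nbrs E w. m w / card (nbrs E w) * of_bool ({w, s} = e))
      \<le> (if w = x then c else 0) + (if w = y then c else 0)" for w
  proof (cases "w = x \<or> w = y")
    case True
    define t where "t = (if w = x then y else x)"
    have other_end: "s = t" if "{w, s} = e" for s
      using True that by (auto simp: e t_def doubleton_eq_iff)
    have "m w / card (nbrs E w) * of_bool ({w, s} = e) \<le> (if s = t then m w / card (nbrs E w) else 0)"
      for s
      using other_end[of s] m_nonneg[of w] by (cases "{w, s} = e") auto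
    then have "(\<Sum>s\<in>nbrs E w. m w / card (nbrs E w) * of_bool ({w, s} = e))
        \<le> (\<Sum>s\<in>nbrs E w. if s = t then m w / card (nbrs E w) else 0)"
      by (intro sum_mono)
    also have "\<dots> \<le> c"
      using m_le[of w] c_nonneg by (cases "finite (nbrs E w)") auto
    also have "c \<le> (if w = x then c else 0) + (if w = y then c else 0)"
      using True c_nonneg by auto
    finally show ?thesis .
  next
    case False
    then have "{w, s} \<noteq> e" for s by (auto simp: e)
    then show ?thesis using c_nonneg by simp
  qed
  have "crossing_mass V E m e \<le> (\<Sum>w\<in>V. (if w = x then c else 0) + (if w = y then c else 0))"
    unfolding crossing_mass_def by (intro sum_mono per_vertex)
  also have "\<dots> = (if x \<in> V then c else 0) + (if y \<in> V then c else 0)"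
    using fin by (simp add: sum.distrib)
  also have "\<dots> \<le> 2 * c"
    using c_nonneg by auto
  finally show ?thesis .
qed

lemma sum_crossing_mass_eq:
  assumes "simple_graph V E"
  shows "(\<Sum>e\<in>E. crossing_mass V E m e) = (\<Sum>s\<in>V. walk_step E m s)"
proof -
  have one_edge: "(\<Sum>e\<in>E. of_bool ({w, s} = e)) = (1::real)" if "s \<in> nbrs E w" for w s
    using that finite_edges[OF assms] by (simp add: nbrs_def)
  have "(\<Sum>e\<in>E. crossing_mass V E m e)
      = (\<Sum>w\<in>V. \<Sum>s\<in>nbrs E w. m w / card (nbrs E w) * (\<Sum>e\<in>E. of_bool ({w, s} = e)))"
    unfolding crossing_mass_def sum_distrib_left
    by (subst sum.swap) (simp add: sum.swap[of _ E])
  also have "\<dots> = (\<Sum>w\<in>V. \<Sum>s\<in>nbrs E w. m w / card (nbrs E w))"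
    by (simp add: one_edge)
  also have "\<dots> = (\<Sum>s\<in>V. walk_step E m s)"
    unfolding walk_step_def by (rule sum_nbrs_swap[OF assms])
  finally show ?thesis .
qed

definition tree_edges :: "nat \<Rightarrow> nat \<Rightarrow> real" where
  "tree_edges q D = (\<Sum>i<D. real q ^ Suc i)"

lemma tree_edges_0 [simp]: "tree_edges q 0 = 0"
  by (simp add: tree_edges_def)

lemma tree_edges_Suc: "tree_edges q (Suc D) = q * (1 + tree_edges q D)"
  unfolding tree_edges_def sum.lessThan_Suc_shift by (simp add: distrib_left sum_distrib_left)

lemma tree_edges_nonneg: "0 \<le> tree_edges q D"
  unfolding tree_edges_def by (intro sum_nonneg) simp

lemma c_q_eq_tree_edges: "c_q q = 1 + tree_edges q q"
  unfolding c_q_def tree_edges_def by (subst sum.atMost_shift) simp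

lemma sum_mult_tree_hits_Suc:
  assumes "simple_graph V E"
  shows "(\<Sum>w\<in>V. m w * tree_hits q E e (Suc D) w)
    = q * (crossing_mass V E m e + (\<Sum>s\<in>V. walk_step E m s * tree_hits q E e D s))"
proof -
  have "(\<Sum>w\<in>V. m w * tree_hits q E e (Suc D) w) = q * (\<Sum>w\<in>V. m w * query_hits q E e D w)"
    by (simp only: tree_hits_Suc_query_hits sum_distrib_left mult.left_commute)
  then show ?thesis
    by (simp only: sum_mult_query_hits[OF assms])
qed

lemma sum_mult_tree_hits_edge_le:
  assumes "simple_graph V E" and "e = {x, y}"
    and "\<And>w. 0 \<le> m w" and "\<And>w. m w / card (nbrs E w) \<le> c"
  shows "(\<Sum>w\<in>V. m w * tree_hits q E e D w) \<le> 2 * c * tree_edges q D"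
  using assms(3,4)
proof (induction D arbitrary: m)
  case (Suc D)
  have IH: "(\<Sum>s\<in>V. walk_step E m s * tree_hits q E e D s) \<le> 2 * c * tree_edges q D"
    using Suc.prems by (intro Suc.IH walk_step_nonneg walk_step_degree_le)
  have "crossing_mass V E m e \<le> 2 * c"
    using Suc.prems by (rule crossing_mass_le[OF assms(1,2)])
  with IH have "(\<Sum>w\<in>V. m w * tree_hits q E e (Suc D) w) \<le> q * (2 * c + 2 * c * tree_edges q D)"
    unfolding sum_mult_tree_hits_Suc[OF assms(1)] by (intro mult_left_mono add_mono) simp_all
  then show ?case
    by (simp add: tree_edges_Suc algebra_simps)
qed simp

lemma sum_edges_sum_mult_tree_hits_le:
  assumes "simple_graph V E" and "\<And>w. 0 \<le> m w"
  shows "(\<Sum>e\<in>E. \<Sum>w\<in>V. m w * tree_hits q E e D w) \<le> (\<Sum>w\<in>V. m w) * tree_edges q D"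
  using assms(2)
proof (induction D arbitrary: m)
  case (Suc D)
  let ?m' = "walk_step E m"
  have mass: "(\<Sum>s\<in>V. ?m' s) \<le> (\<Sum>w\<in>V. m w)"
    by (rule sum_walk_step_le[OF assms(1) Suc.prems])
  have "(\<Sum>e\<in>E. \<Sum>s\<in>V. ?m' s * tree_hits q E e D s) \<le> (\<Sum>s\<in>V. ?m' s) * tree_edges q D"
    using Suc.prems by (intro Suc.IH walk_step_nonneg)
  also have "\<dots> \<le> (\<Sum>w\<in>V. m w) * tree_edges q D"
    by (intro mult_right_mono mass tree_edges_nonneg)
  finally have IH: "(\<Sum>e\<in>E. \<Sum>s\<in>V. ?m' s * tree_hits q E e D s) \<le> (\<Sum>w\<in>V. m w) * tree_edges q D" .
  have "(\<Sum>e\<in>E. \<Sum>w\<in>V. m w * tree_hits q E e (Suc D) w)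
      = q * ((\<Sum>s\<in>V. ?m' s) + (\<Sum>e\<in>E. \<Sum>s\<in>V. ?m' s * tree_hits q E e D s))"
    by (simp only: sum_mult_tree_hits_Suc[OF assms(1)] sum_distrib_left[symmetric] sum.distrib
        sum_crossing_mass_eq[OF assms(1)])
  also have "\<dots> \<le> q * ((\<Sum>w\<in>V. m w) + (\<Sum>w\<in>V. m w) * tree_edges q D)"
    by (intro mult_left_mono add_mono mass IH) simp
  also have "\<dots> = (\<Sum>w\<in>V. m w) * tree_edges q (Suc D)"
    by (simp add: tree_edges_Suc algebra_simps)
  finally show ?case .
qed simp

section \<open>A supermartingale for q-RBFS\<close>

lemma nn_integral_rn_query:
  assumes "finite (nbrs E w)" and "\<And>s. 0 \<le> f s"
  shows "(\<integral>\<^sup>+s. ennreal (f s) \<partial>rn_query E w) =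
     ennreal (if nbrs E w = {} then f None else (\<Sum>s\<in>nbrs E w. f (Some s)) / card (nbrs E w))"
proof (cases "nbrs E w = {}")
  case False
  have "(\<integral>\<^sup>+s. ennreal (f s) \<partial>rn_query E w) = (\<Sum>s\<in>nbrs E w. ennreal (f (Some s))) / card (nbrs E w)"
    using False assms by (simp add: rn_query_def nn_integral_pmf_of_set)
  also have "\<dots> = ennreal ((\<Sum>s\<in>nbrs E w. f (Some s)) / card (nbrs E w))"
    using False assms
    by (simp add: sum_ennreal sum_nonneg divide_ennreal card_gt_0_iff ennreal_of_nat_eq_real_of_nat)
  finally show ?thesis using False by simp
qed (simp add: rn_query_def)

lemma rbfs_process_level_self:
  "rbfs_process q u s (Q, lev, HV, HE) = (Q', lev', HV', HE') \<Longrightarrow> lev' u = lev u"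
  by (cases s) (auto split: option.splits if_splits)

lemma rbfs_process_edges:
  "rbfs_process q u s (Q, lev, HV, HE) = (Q', lev', HV', HE') \<Longrightarrow>
     HE' = (case s of None \<Rightarrow> HE | Some s \<Rightarrow> insert {u, s} HE)"
  by (cases s) (auto split: option.splits if_splits)

text \<open>The number of layers q-RBFS still explores below a queued vertex at level l. Queued vertices
  always have a level below q; the None case and the max are junk values chosen so that the
  potential below is a supermartingale without carrying this invariant.\<close>
definition remaining_depth :: "nat \<Rightarrow> nat option \<Rightarrow> nat" where
  "remaining_depth q l = (case l of None \<Rightarrow> q | Some l \<Rightarrow> max 1 (q - l))"

definition queue_hits :: "nat \<Rightarrow> 'a set set \<Rightarrow> 'a set \<Rightarrow> ('a \<Rightarrow> nat option) \<Rightarrow> 'a list \<Rightarrow> real" where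
  "queue_hits q E e lev Q = (\<Sum>w\<leftarrow>Q. tree_hits q E e (remaining_depth q (lev w)) w)"

lemma queue_hits_nonneg: "0 \<le> queue_hits q E e lev Q"
  unfolding queue_hits_def by (induction Q) (auto intro: add_nonneg_nonneg tree_hits_nonneg)

lemma queue_hits_mono:
  assumes "\<And>w. remaining_depth q (lev' w) \<le> remaining_depth q (lev w)"
  shows "queue_hits q E e lev' Q \<le> queue_hits q E e lev Q"
  unfolding queue_hits_def by (induction Q) (auto intro: add_mono tree_hits_mono assms)

lemma queue_hits_rbfs_process_le:
  assumes "remaining_depth q (lev u) = Suc D"
    and "rbfs_process q u (Some s) (Q, lev, HV, HE) = (Q', lev', HV', HE')"
  shows "queue_hits q E e lev' Q' \<le> queue_hits q E e lev Q + tree_hits q E e D s"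
proof (cases "\<exists>l. lev u = Some l \<and> l < q - 1 \<and> lev s = None")
  case True
  then obtain l where l: "lev u = Some l" "l < q - 1" "lev s = None" by blast
  then have step: "Q' = Q @ [s]" "lev' = lev(s := Some (l + 1))"
    using assms(2) by auto
  have "D = q - l - 1"
    using assms(1) l by (simp add: remaining_depth_def)
  then have "remaining_depth q (lev' s) = D"
    using l by (simp add: step remaining_depth_def)
  moreover have "queue_hits q E e lev' Q \<le> queue_hits q E e lev Q"
    using l by (intro queue_hits_mono) (auto simp: step remaining_depth_def)
  ultimately show ?thesis
    by (simp add: step queue_hits_def)
next
  case False
  then have "Q' = Q" "lev' = lev"
    using assms(2) by (auto split: option.splits if_splits)
  then show ?thesis
    using tree_hits_nonneg[of q E e D s] by simp
qed

fun potential :: "nat \<Rightarrow> 'a set set \<Rightarrow> 'a set \<Rightarrow> 'a rbfs_state \<Rightarrow> ennreal" where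
  "potential q E e (Q, lev, HV, HE) = (if e \<in> HE then 1 else ennreal (queue_hits q E e lev Q))"

text \<open>The potential in the middle of a loop iteration, when the popped vertex u still has k
  queries to make.\<close>
fun pending_potential ::
  "nat \<Rightarrow> 'a set set \<Rightarrow> 'a set \<Rightarrow> nat \<Rightarrow> 'a \<Rightarrow> nat \<Rightarrow> 'a rbfs_state \<Rightarrow> ennreal" where
  "pending_potential q E e D u k (Q, lev, HV, HE) =
     (if e \<in> HE then 1 else ennreal (queue_hits q E e lev Q + k * query_hits q E e D u))"

lemma pending_potential_rbfs_process_le:
  assumes "remaining_depth q (lev u) = Suc D" and "e \<notin> HE"
  shows "pending_potential q E e D u k (rbfs_process q u s (Q, lev, HV, HE))
    \<le> ennreal (queue_hits q E e lev Q + k * query_hits q E e D u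
         + (case s of None \<Rightarrow> 0 | Some s \<Rightarrow> of_bool ({u, s} = e) + tree_hits q E e D s))"
proof (cases s)
  case (Some s)
  obtain Q' lev' HV' HE' where step: "rbfs_process q u (Some s) (Q, lev, HV, HE) = (Q', lev', HV', HE')"
    by (metis prod_cases4)
  have nonneg: "0 \<le> queue_hits q E e lev Q + k * query_hits q E e D u"
    by (simp add: queue_hits_nonneg query_hits_nonneg)
  have queue: "queue_hits q E e lev' Q' \<le> queue_hits q E e lev Q + tree_hits q E e D s"
    by (rule queue_hits_rbfs_process_le[OF assms(1) step])
  show ?thesis
  proof (cases "e \<in> HE'")
    case True
    then have "e = {u, s}"
      using rbfs_process_edges[OF step] assms(2) by auto
    then show ?thesis
      using Some step True nonneg tree_hits_nonneg[of q E e D s] by (auto intro!: ennreal_leI)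
  next
    case False
    then show ?thesis
      using Some step queue by (auto intro!: ennreal_leI)
  qed
qed (use assms in simp)

lemma nn_integral_pending_potential_le:
  assumes "finite (nbrs E u)" and "remaining_depth q (lev u) = Suc D"
  shows "(\<integral>\<^sup>+s. pending_potential q E e D u k (rbfs_process q u s (Q, lev, HV, HE)) \<partial>rn_query E u)
    \<le> pending_potential q E e D u (Suc k) (Q, lev, HV, HE)"
proof (cases "e \<in> HE")
  case True
  have "pending_potential q E e D u k (rbfs_process q u s (Q, lev, HV, HE)) = 1" for s
    using True rbfs_process_edges[of q u s Q lev HV HE] by (cases "rbfs_process q u s (Q, lev, HV, HE)")
      (auto split: option.splits)
  then show ?thesis
    using True by (simp add: measure_pmf.emeasure_space_1)
next
  case False
  define A where "A = queue_hits q E e lev Q + k * query_hits q E e D u"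
  define hit where "hit s = (case s of None \<Rightarrow> 0 | Some s \<Rightarrow> of_bool ({u, s} = e) + tree_hits q E e D s)"
    for s
  have A_nonneg: "0 \<le> A"
    by (simp add: A_def queue_hits_nonneg query_hits_nonneg)
  have hit_nonneg: "0 \<le> hit s" for s
    by (auto simp: hit_def tree_hits_nonneg add_nonneg_nonneg split: option.splits)
  have "(\<integral>\<^sup>+s. pending_potential q E e D u k (rbfs_process q u s (Q, lev, HV, HE)) \<partial>rn_query E u)
      \<le> (\<integral>\<^sup>+s. ennreal (A + hit s) \<partial>rn_query E u)"
    unfolding A_def hit_def
    by (intro nn_integral_mono pending_potential_rbfs_process_le[where lev=lev and u=u, OF assms(2) False])
  also have "\<dots> = ennreal (A + query_hits q E e D u)"
    using A_nonneg hit_nonneg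
    by (subst nn_integral_rn_query[OF assms(1)])
      (auto simp: hit_def query_hits_def sum.distrib add_divide_distrib card_gt_0_iff assms(1))
  also have "\<dots> = pending_potential q E e D u (Suc k) (Q, lev, HV, HE)"
    using False by (simp add: A_def algebra_simps)
  finally show ?thesis .
qed

lemma nn_integral_rbfs_queries_le:
  assumes "finite (nbrs E u)" and "remaining_depth q (lev u) = Suc D"
  shows "(\<integral>\<^sup>+x. potential q E e x \<partial>rbfs_queries q E u k (Q, lev, HV, HE))
    \<le> pending_potential q E e D u k (Q, lev, HV, HE)"
  using assms(2)
proof (induction k arbitrary: Q lev HV HE)
  case (Suc k)
  have "(\<integral>\<^sup>+x. potential q E e x \<partial>rbfs_queries q E u k (rbfs_process q u s (Q, lev, HV, HE)))
      \<le> pending_potential q E e D u k (rbfs_process q u s (Q, lev, HV, HE))" for s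
  proof -
    obtain Q' lev' HV' HE' where step: "rbfs_process q u s (Q, lev, HV, HE) = (Q', lev', HV', HE')"
      by (metis prod_cases4)
    then show ?thesis
      using Suc.IH[of lev'] Suc.prems rbfs_process_level_self[OF step] by simp
  qed
  then have "(\<integral>\<^sup>+x. potential q E e x \<partial>rbfs_queries q E u (Suc k) (Q, lev, HV, HE))
      \<le> (\<integral>\<^sup>+s. pending_potential q E e D u k (rbfs_process q u s (Q, lev, HV, HE)) \<partial>rn_query E u)"
    by (simp add: nn_integral_mono)
  also have "\<dots> \<le> pending_potential q E e D u (Suc k) (Q, lev, HV, HE)"
    by (rule nn_integral_pending_potential_le[where lev=lev, OF assms(1) Suc.prems])
  finally show ?case .
qed simp

lemma nn_integral_rbfs_step_le:
  assumes "q > 0" and "\<And>w. finite (nbrs E w)"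
  shows "(\<integral>\<^sup>+x. potential q E e x \<partial>rbfs_step q E st) \<le> potential q E e st"
proof -
  obtain Q lev HV HE where st: "st = (Q, lev, HV, HE)"
    by (metis prod_cases4)
  show ?thesis
  proof (cases Q)
    case (Cons u Q')
    define D where "D = remaining_depth q (lev u) - 1"
    have depth: "remaining_depth q (lev u) = Suc D"
      using assms(1) by (auto simp: D_def remaining_depth_def split: option.splits)
    have "(\<integral>\<^sup>+x. potential q E e x \<partial>rbfs_step q E st) \<le> pending_potential q E e D u q (Q', lev, HV, HE)"
      using nn_integral_rbfs_queries_le[where lev=lev and u=u, OF assms(2) depth] by (simp add: st Cons)
    also have "\<dots> = potential q E e st"
      using depth by (simp add: st Cons queue_hits_def tree_hits_Suc_query_hits algebra_simps del: tree_hits.simps)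
    finally show ?thesis .
  qed (simp add: st)
qed

lemma nn_integral_rbfs_iter_le:
  assumes "\<And>st. (\<integral>\<^sup>+x. f x \<partial>rbfs_step q E st) \<le> f st"
  shows "(\<integral>\<^sup>+x. f x \<partial>rbfs_iter q E k st) \<le> f st"
proof (induction k arbitrary: st)
  case (Suc k)
  have "(\<integral>\<^sup>+x. f x \<partial>rbfs_iter q E (Suc k) st) = (\<integral>\<^sup>+y. (\<integral>\<^sup>+x. f x \<partial>rbfs_iter q E k y) \<partial>rbfs_step q E st)"
    by simp
  also have "\<dots> \<le> (\<integral>\<^sup>+y. f y \<partial>rbfs_step q E st)"
    by (intro nn_integral_mono Suc.IH)
  also have "\<dots> \<le> f st"
    by (rule assms)
  finally show ?case .
qed simp

lemma emeasure_q_rbfs_edge_le: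
  assumes "q > 0" and "\<And>w. finite (nbrs E w)"
  shows "emeasure (q_rbfs q V E v) {H. e \<in> snd H} \<le> tree_hits q E e q v"
proof -
  let ?init = "([v], (\<lambda>_. None)(v := Some 0), {v}, {}) :: 'a rbfs_state"
  have "emeasure (q_rbfs q V E v) {H. e \<in> snd H}
      = (\<integral>\<^sup>+x. indicator {x. e \<in> snd (snd (snd x))} x \<partial>rbfs_iter q E (card V + 1) ?init)"
    unfolding q_rbfs_def by (simp add: case_prod_beta vimage_def)
  also have "\<dots> \<le> (\<integral>\<^sup>+x. potential q E e x \<partial>rbfs_iter q E (card V + 1) ?init)"
    by (intro nn_integral_mono) (auto simp: indicator_def)
  also have "\<dots> \<le> potential q E e ?init"
    by (intro nn_integral_rbfs_iter_le nn_integral_rbfs_step_le assms)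
  also have "\<dots> = tree_hits q E e q v"
    using assms(1) by (simp add: queue_hits_def remaining_depth_def del: tree_hits.simps)
  finally show ?thesis .
qed

section \<open>Two independent searches\<close>

lemma prob_random_q_rbfs_edge_le:
  assumes "simple_graph V E" and "q > 0" and "V \<noteq> {}"
  shows "measure_pmf.prob (bind_pmf (pmf_of_set V) (q_rbfs q V E)) {H. e \<in> snd H}
    \<le> (\<Sum>v\<in>V. tree_hits q E e q v) / card V"
proof -
  have fin: "finite V" using assms(1) by (simp add: simple_graph_def)
  have "emeasure (bind_pmf (pmf_of_set V) (q_rbfs q V E)) {H. e \<in> snd H}
      \<le> (\<integral>\<^sup>+v. ennreal (tree_hits q E e q v) \<partial>pmf_of_set V)"
    by (simp add: nn_integral_mono emeasure_q_rbfs_edge_le assms(2) finite_nbrs[OF assms(1)])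
  also have "\<dots> = ennreal ((\<Sum>v\<in>V. tree_hits q E e q v) / card V)"
    using fin assms(3)
    by (simp add: nn_integral_pmf_of_set sum_ennreal tree_hits_nonneg sum_nonneg divide_ennreal
        card_gt_0_iff ennreal_of_nat_eq_real_of_nat)
  finally show ?thesis
    by (simp add: measure_pmf.emeasure_eq_measure sum_nonneg tree_hits_nonneg)
qed

lemma prob_random_q_rbfs_edge_le_tree_edges:
  assumes "simple_graph V E" and "q > 0" and "V \<noteq> {}" and "e \<in> E"
  shows "measure_pmf.prob (bind_pmf (pmf_of_set V) (q_rbfs q V E)) {H. e \<in> snd H}
    \<le> 2 * tree_edges q q / card V"
proof -
  obtain x y where e: "e = {x, y}"
    using assms(1,4) unfolding simple_graph_def by blast
  have "(1 / card V) / card (nbrs E w) \<le> 1 / card V" for w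
    using frac_le[of "1 / card V" "1 / card V" 1 "card (nbrs E w)"]
    by (cases "card (nbrs E w) = 0") simp_all
  then have "(\<Sum>v\<in>V. 1 / card V * tree_hits q E e q v) \<le> 2 * (1 / card V) * tree_edges q q"
    by (intro sum_mult_tree_hits_edge_le[OF assms(1) e]) simp_all
  then show ?thesis
    using prob_random_q_rbfs_edge_le[OF assms(1-3), of e] by (simp add: sum_divide_distrib)
qed

lemma sum_prob_random_q_rbfs_edge_le:
  assumes "simple_graph V E" and "q > 0" and "V \<noteq> {}"
  shows "(\<Sum>e\<in>E. measure_pmf.prob (bind_pmf (pmf_of_set V) (q_rbfs q V E)) {H. e \<in> snd H})
    \<le> tree_edges q q"
proof -
  have fin: "finite V" using assms(1) by (simp add: simple_graph_def)
  have "(\<Sum>e\<in>E. measure_pmf.prob (bind_pmf (pmf_of_set V) (q_rbfs q V E)) {H. e \<in> snd H})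
      \<le> (\<Sum>e\<in>E. \<Sum>v\<in>V. 1 / card V * tree_hits q E e q v)"
    using prob_random_q_rbfs_edge_le[OF assms] by (intro sum_mono) (simp add: sum_divide_distrib)
  also have "\<dots> \<le> (\<Sum>v\<in>V. 1 / card V) * tree_edges q q"
    by (intro sum_edges_sum_mult_tree_hits_le[OF assms(1)]) simp
  also have "(\<Sum>v\<in>V. 1 / real (card V)) = 1"
    using fin assms(3) by simp
  finally show ?thesis by simp
qed

lemma set_pmf_random_q_rbfs_edges:
  assumes "simple_graph V E" and "q > 0" and "V \<noteq> {}"
    and "H \<in> set_pmf (bind_pmf (pmf_of_set V) (q_rbfs q V E))"
  shows "snd H \<subseteq> E"
proof
  fix e assume "e \<in> snd H"
  show "e \<in> E"
  proof (rule ccontr)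
    assume "e \<notin> E"
    then have "measure_pmf.prob (bind_pmf (pmf_of_set V) (q_rbfs q V E)) {H. e \<in> snd H} \<le> 0"
      using prob_random_q_rbfs_edge_le[OF assms(1-3), of e] by (simp add: tree_hits_non_edge)
    then have "measure_pmf.prob (bind_pmf (pmf_of_set V) (q_rbfs q V E)) {H. e \<in> snd H} = 0"
      by (simp add: order.antisym)
    with assms(4) \<open>e \<in> snd H\<close> show False
      by (auto simp: measure_pmf_zero_iff)
  qed
qed

lemma prob_pair_pmf_sets_intersect_le:
  fixes p :: "'b pmf" and F :: "'b \<Rightarrow> 'c set"
  assumes "finite U" and "\<And>x. x \<in> set_pmf p \<Longrightarrow> F x \<subseteq> U"
  shows "measure_pmf.prob (pair_pmf p p) {(x, y). F x \<inter> F y \<noteq> {}}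
    \<le> (\<Sum>e\<in>U. measure_pmf.prob p {x. e \<in> F x} ^ 2)"
proof -
  define A where "A e = {x. e \<in> F x} \<inter> set_pmf p" for e
  have "measure_pmf.prob (pair_pmf p p) {(x, y). F x \<inter> F y \<noteq> {}}
      = measure_pmf.prob (pair_pmf p p) ({(x, y). F x \<inter> F y \<noteq> {}} \<inter> set_pmf (pair_pmf p p))"
    by (rule measure_Int_set_pmf[symmetric])
  also have "\<dots> \<le> measure_pmf.prob (pair_pmf p p) (\<Union>e\<in>U. A e \<times> A e)"
    using assms(2) by (intro measure_pmf.finite_measure_mono) (auto simp: A_def)
  also have "\<dots> \<le> (\<Sum>e\<in>U. measure_pmf.prob (pair_pmf p p) (A e \<times> A e))"
    by (intro measure_pmf.finite_measure_subadditive_finite assms(1)) simp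
  also have "\<dots> = (\<Sum>e\<in>U. measure_pmf.prob p {x. e \<in> F x} ^ 2)"
  proof (intro sum.cong refl)
    fix e
    have "countable (A e)"
      unfolding A_def by (intro countable_Int2 countable_set_pmf)
    then show "measure_pmf.prob (pair_pmf p p) (A e \<times> A e) = measure_pmf.prob p {x. e \<in> F x} ^ 2"
      by (simp add: measure_pmf_prob_product A_def measure_Int_set_pmf power2_eq_square)
  qed
  finally show ?thesis .
qed

lemma bind_pmf_pair_eq_pair_pmf:
  "bind_pmf A (\<lambda>u. bind_pmf A (\<lambda>v. bind_pmf (f u) (\<lambda>x. bind_pmf (f v) (\<lambda>y. return_pmf (x, y)))))
    = pair_pmf (bind_pmf A f) (bind_pmf A f)"
  unfolding pair_pmf_def by (simp add: bind_assoc_pmf bind_commute_pmf[of A])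

lemma sq_div_bound_of_card_ge:
  fixes S \<alpha> n :: real
  assumes "0 < \<alpha>" and "\<alpha> \<le> 1" and "1 \<le> q" and "0 \<le> S"
    and "q * (1 + S) / \<alpha>\<^sup>2 \<le> n"
  shows "S * (2 * S / n) \<le> 2 * \<alpha> * q * (1 + S)"
proof -
  have qc_le: "q * (1 + S) \<le> n * \<alpha>\<^sup>2"
    using assms(1,5) by (simp add: pos_divide_le_eq)
  have n_pos: "0 < n"
    using qc_le assms(1,3,4) by (smt (verit) mult_nonneg_nonneg zero_le_power2 mult_le_0_iff)
  have "1 + S \<le> q * (1 + S)"
    using assms(3,4) by simp
  also have "\<dots> \<le> n * \<alpha>\<^sup>2" by (rule qc_le)
  also have "\<dots> \<le> n * \<alpha> * q"
    using assms(1-3) n_pos by (simp add: power2_eq_square mult_left_le mult_right_mono mult_le_one)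
  finally have c_le: "1 + S \<le> n * \<alpha> * q" .
  have "S * S \<le> (1 + S) * (n * \<alpha> * q)"
    using assms(4) c_le by (intro mult_mono) simp_all
  then show ?thesis
    using n_pos by (simp add: divide_le_eq algebra_simps)
qed

theorem lemma3p8:
  fixes V :: "'a set" and E :: "'a set set" and n q :: nat and \<alpha> :: real
  assumes "simple_graph V E" and "card V = n"
    and "q > 0" and "0 < \<alpha>" and "\<alpha> \<le> 1"
    and "real n \<ge> real q * c_q q / \<alpha>\<^sup>2"
  shows "measure_pmf.prob
           (bind_pmf (pmf_of_set V) (\<lambda>u. bind_pmf (pmf_of_set V) (\<lambda>v.
              bind_pmf (q_rbfs q V E u) (\<lambda>Hu. bind_pmf (q_rbfs q V E v) (\<lambda>Hv.
                return_pmf (Hu, Hv))))))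
           {(Hu, Hv). snd Hu \<inter> snd Hv = {}}
         \<ge> 1 - 2 * \<alpha> * real q * c_q q"
proof -
  let ?H = "bind_pmf (pmf_of_set V) (q_rbfs q V E)"
  let ?p = "\<lambda>e. measure_pmf.prob ?H {H. e \<in> snd H}"
  let ?S = "tree_edges q q"
  let ?overlap = "{(Hu, Hv). snd Hu \<inter> snd Hv \<noteq> {}}"
  have "0 < real q * c_q q / \<alpha>\<^sup>2"
    using assms(3,4) by (simp add: c_q_eq_tree_edges add_pos_nonneg tree_edges_nonneg)
  then have V: "V \<noteq> {}"
    using assms(2,6) by auto
  have "measure_pmf.prob (pair_pmf ?H ?H) ?overlap \<le> (\<Sum>e\<in>E. ?p e ^ 2)"
    using set_pmf_random_q_rbfs_edges[OF assms(1,3) V]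
    by (intro prob_pair_pmf_sets_intersect_le finite_edges[OF assms(1)])
  also have "\<dots> \<le> (\<Sum>e\<in>E. ?p e * (2 * ?S / n))"
    unfolding power2_eq_square using prob_random_q_rbfs_edge_le_tree_edges[OF assms(1,3) V] assms(2)
    by (intro sum_mono mult_left_mono) simp_all
  also have "\<dots> \<le> ?S * (2 * ?S / n)"
    unfolding sum_distrib_right[symmetric] using sum_prob_random_q_rbfs_edge_le[OF assms(1,3) V]
    by (intro mult_right_mono) (simp_all add: tree_edges_nonneg)
  also have "\<dots> \<le> 2 * \<alpha> * q * c_q q"
    using assms(3-6) unfolding c_q_eq_tree_edges
    by (intro sq_div_bound_of_card_ge) (simp_all add: tree_edges_nonneg)
  finally have "measure_pmf.prob (pair_pmf ?H ?H) ?overlap \<le> 2 * \<alpha> * q * c_q q" .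
  moreover have disjoint: "{(Hu, Hv). snd Hu \<inter> snd Hv = {}} = UNIV - ?overlap"
    by auto
  ultimately show ?thesis
    unfolding bind_pmf_pair_eq_pair_pmf disjoint
    using measure_pmf.prob_compl[of ?overlap "pair_pmf ?H ?H"] by simp
qed

end
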